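(* Let $\mathcal{H}=\mathcal{H}_h\oplus\mathcal{H}_h$ with basis vectors $|l,m\rangle_+$ (first copy) and $|l,m\rangle_-$ (second copy), representation $\pi=\pi_+\oplus\pi_-$ of $\mathcal{A}(S^2_q)$, and let $J$ be the antilinear operator $J|l,m\rangle_\pm=i^{2m}|l,-m\rangle_\mp$. Then $J$ does not map $\pi(\mathcal{A}(S^2_q))$ into its commutant: there exists $x\in\mathcal{A}(S^2_q)$ such that $J\pi(x)J^{-1}$ does not commute with $\pi(\mathcal{A}(S^2_q))$.
   Context: $0<q\le1$ and $[x]:=\frac{q^x-q^{-x}}{q-q^{-1}}$. $\mathcal{A}(S^2_q)$ is the $*$-algebra generated by $a,a^*,b=b^*$ with $ba=q^2ab$, $a^*b=q^2ba^*$, $a^*a+b^2=1$, $q^2aa^*+q^{-2}b^2=q^2$. $\mathcal{H}_h=\bigoplus_{l=\frac12,\frac32,\dots}V_l$, $V_l$ with orthonormal basis $|l,m\rangle$, $m=-l,\dots,l$. The representations $\pi_\pm$ on $\mathcal{H}_h$ are given by $\pi_\pm(a)|l,m\rangle=\pm(1+q^2)\frac{q^{m-\frac12}}{[2l][2l+2]}\sqrt{[l+m+1][l-m]}|l,m+1\rangle+\frac{q^{m-l-\frac12}}{[2l+2]}\sqrt{[l+m+1][l+m+2]}|l+1,m+1\rangle-\frac{q^{m+l+\frac12}}{[2l]}\sqrt{[l-m][l-m-1]}|l-1,m\rangle$, $\pi_\pm(b)|l,m\rangle=\pm\frac{[l-m+1][l+m]-q^2[l-m][l+m+1]}{[2l][2l+2]}|l,m\rangle-\frac{q^{m+1}}{[2l+2]}\sqrt{[l-m+1][l+m+1]}|l+1,m\rangle-\frac{q^{m+1}}{[2l]}\sqrt{[l-m][l+m]}|l-1,m\rangle$,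 $\pi_\pm(a^* )=\pi_\pm(a)^*$ (vectors with $|m|>l$ or $l<\frac12$ are zero). *)

theory Defs
  imports Complex_Main
begin

definition qn :: "real \<Rightarrow> real \<Rightarrow> real" where
  "qn q x = (if q = 1 then x else (q powr x - q powr (-x)) / (q - q powr (-1)))"

text \<open>Basis indices of H = H_h (+) H_h: (s, l, m) stands for |l,m>_+ if s = True and
  |l,m>_- if s = False.\<close>
type_synonym idx = "bool \<times> real \<times> real"
type_synonym vec = "idx \<Rightarrow> complex"

definition halfint_pos :: "real \<Rightarrow> bool" where
  "halfint_pos l \<longleftrightarrow> (\<exists>n::nat. l = real n + 1/2)"

definition valid :: "idx \<Rightarrow> bool" where
  "valid i \<longleftrightarrow> (case i of (s, l, m) \<Rightarrow>
      halfint_pos l \<and> \<bar>m\<bar> \<le> l \<and> l - m \<in> \<int>)"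

definition ket :: "idx \<Rightarrow> vec" where
  "ket i = (\<lambda>j. if valid i \<and> j = i then 1 else 0)"

definition Dom :: "vec set" where
  "Dom = {v. finite {j. v j \<noteq> 0} \<and> (\<forall>j. v j \<noteq> 0 \<longrightarrow> valid j)}"

definition lin_ext :: "(idx \<Rightarrow> vec) \<Rightarrow> vec \<Rightarrow> vec" where
  "lin_ext f v = (\<lambda>i. \<Sum>j\<in>{j. v j \<noteq> 0}. v j * f j i)"

definition sg :: "bool \<Rightarrow> real" where
  "sg t = (if t then 1 else -1)"

definition piA_b :: "real \<Rightarrow> idx \<Rightarrow> vec" where
  "piA_b q i = (case i of (t, l, m) \<Rightarrow> (\<lambda>j.
      complex_of_real (sg t * (1 + q^2) * q powr (m - 1/2) / (qn q (2*l) * qn q (2*l+2))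
          * sqrt (qn q (l+m+1) * qn q (l-m))) * ket (t, l, m+1) j
    + complex_of_real (q powr (m - l - 1/2) / qn q (2*l+2)
          * sqrt (qn q (l+m+1) * qn q (l+m+2))) * ket (t, l+1, m+1) j
    - complex_of_real (q powr (m + l + 1/2) / qn q (2*l)
          * sqrt (qn q (l-m) * qn q (l-m-1))) * ket (t, l-1, m) j))"

definition piB_b :: "real \<Rightarrow> idx \<Rightarrow> vec" where
  "piB_b q i = (case i of (t, l, m) \<Rightarrow> (\<lambda>j.
      complex_of_real (sg t * (qn q (l-m+1) * qn q (l+m) - q^2 * qn q (l-m) * qn q (l+m+1))
          / (qn q (2*l) * qn q (2*l+2))) * ket (t, l, m) j
    - complex_of_real (q powr (m+1) / qn q (2*l+2)
          * sqrt (qn q (l-m+1) * qn q (l+m+1))) * ket (t, l+1, m) j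
    - complex_of_real (q powr (m+1) / qn q (2*l)
          * sqrt (qn q (l-m) * qn q (l+m))) * ket (t, l-1, m) j))"

definition adj_b :: "(idx \<Rightarrow> vec) \<Rightarrow> idx \<Rightarrow> vec" where
  "adj_b f j = (\<lambda>i. if valid i then cnj (f i j) else 0)"

definition piA :: "real \<Rightarrow> vec \<Rightarrow> vec" where "piA q = lin_ext (piA_b q)"
definition piAstar :: "real \<Rightarrow> vec \<Rightarrow> vec" where "piAstar q = lin_ext (adj_b (piA_b q))"
definition piB :: "real \<Rightarrow> vec \<Rightarrow> vec" where "piB q = lin_ext (piB_b q)"

inductive_set pi_alg :: "real \<Rightarrow> (vec \<Rightarrow> vec) set" for q :: real where
  alg_id: "id \<in> pi_alg q"
| alg_a: "piA q \<in> pi_alg q"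
| alg_astar: "piAstar q \<in> pi_alg q"
| alg_b: "piB q \<in> pi_alg q"
| alg_add: "S \<in> pi_alg q \<Longrightarrow> T \<in> pi_alg q \<Longrightarrow> (\<lambda>v j. S v j + T v j) \<in> pi_alg q"
| alg_scale: "T \<in> pi_alg q \<Longrightarrow> (\<lambda>v j. c * T v j) \<in> pi_alg q"
| alg_mult: "S \<in> pi_alg q \<Longrightarrow> T \<in> pi_alg q \<Longrightarrow> S \<circ> T \<in> pi_alg q"

definition J_b :: "idx \<Rightarrow> vec" where
  "J_b i = (case i of (s, l, m) \<Rightarrow> (\<lambda>j. \<i> powi \<lfloor>2*m\<rfloor> * ket (\<not> s, l, -m) j))"

definition Jop :: "vec \<Rightarrow> vec" where
  "Jop v = (\<lambda>i. \<Sum>j\<in>{j. v j \<noteq> 0}. cnj (v j) * J_b j i)"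

definition Jinv :: "vec \<Rightarrow> vec" where
  "Jinv = inv_into Dom Jop"

end

theory Submission
  imports Defs
begin

text \<open>Since every m is a half-integer, the phases i^(2m) give J^2 = -1, so J^-1 = -J on
  finite vectors. Take S = T = pi(a) and v = |1/2,1/2>_+ and compare |1/2,1/2>_+ components.
  As |1/2,3/2> does not exist, pi(a) v is a multiple of |3/2,3/2>_+, J^-1 turns it into a
  multiple of |3/2,-3/2>_-, and as |1/2,-3/2> does not exist either, pi(a) maps that into
  V_3/2 (+) V_5/2; so J pi(a) J^-1 pi(a) v has no component in V_1/2. On the other side,
  J^-1 v is a multiple of |1/2,-1/2>_-, the same-l part of pi(a) moves it to |1/2,1/2>_-,
  J to |1/2,-1/2>_+ and pi(a) to |1/2,1/2>_+: the component is alpha^2, where alpha is the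
  non-zero same-l coefficient of pi(a) at |1/2,-1/2>.\<close>

lemma DomI: "finite {j. u j \<noteq> 0} \<Longrightarrow> (\<And>j. \<not> valid j \<Longrightarrow> u j = 0) \<Longrightarrow> u \<in> Dom"
  unfolding Dom_def by blast

lemma Dom_vanishes: "u \<in> Dom \<Longrightarrow> \<not> valid j \<Longrightarrow> u j = 0"
  unfolding Dom_def by blast

lemma finite_support_Dom: "u \<in> Dom \<Longrightarrow> finite {j. u j \<noteq> 0}"
  unfolding Dom_def by blast

lemma ket_in_Dom: "ket i \<in> Dom"
  by (auto simp: Dom_def ket_def)

lemma Dom_scale: "u \<in> Dom \<Longrightarrow> (\<lambda>j. c * u j) \<in> Dom"
  by (rule DomI) (auto intro: finite_subset[OF _ finite_support_Dom] simp: Dom_vanishes)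

lemma Dom_add: "u \<in> Dom \<Longrightarrow> w \<in> Dom \<Longrightarrow> (\<lambda>j. u j + w j) \<in> Dom"
  by (rule DomI)
    (auto intro: finite_subset[of _ "{j. u j \<noteq> 0} \<union> {j. w j \<noteq> 0}"] finite_support_Dom
      simp: Dom_vanishes)

lemma Dom_diff: "u \<in> Dom \<Longrightarrow> w \<in> Dom \<Longrightarrow> (\<lambda>j. u j - w j) \<in> Dom"
  by (rule DomI)
    (auto intro: finite_subset[of _ "{j. u j \<noteq> 0} \<union> {j. w j \<noteq> 0}"] finite_support_Dom
      simp: Dom_vanishes)

lemma Dom_uminus: "u \<in> Dom \<Longrightarrow> (\<lambda>j. - u j) \<in> Dom"
  by (rule DomI) (simp_all add: finite_support_Dom Dom_vanishes)

lemma lin_ext_in_Dom: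
  assumes u: "u \<in> Dom" and f: "\<And>j. valid j \<Longrightarrow> f j \<in> Dom"
  shows "lin_ext f u \<in> Dom"
proof (rule DomI)
  have nonzero: "\<exists>j. valid j \<and> u j \<noteq> 0 \<and> f j i \<noteq> 0" if nz: "lin_ext f u i \<noteq> 0" for i
  proof -
    obtain j where "u j * f j i \<noteq> 0"
      using nz unfolding lin_ext_def by (blast elim: sum.not_neutral_contains_not_neutral)
    then show ?thesis
      using Dom_vanishes[OF u] by (metis mult_zero_left mult_zero_right)
  qed
  have "{i. lin_ext f u i \<noteq> 0} \<subseteq> (\<Union>j\<in>{j. valid j \<and> u j \<noteq> 0}. {i. f j i \<noteq> 0})"
    using nonzero by blast
  moreover have "finite (\<Union>j\<in>{j. valid j \<and> u j \<noteq> 0}. {i. f j i \<noteq> 0})"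
    using finite_support_Dom[OF u] finite_support_Dom[OF f] by simp
  ultimately show "finite {i. lin_ext f u i \<noteq> 0}"
    by (rule finite_subset)
  show "lin_ext f u i = 0" if "\<not> valid i" for i
    using nonzero Dom_vanishes[OF f] that by blast
qed

lemma lin_ext_add: "lin_ext (\<lambda>j y. f j y + g j y) u = (\<lambda>y. lin_ext f u y + lin_ext g u y)"
  by (simp add: lin_ext_def distrib_left sum.distrib)

lemma lin_ext_diff: "lin_ext (\<lambda>j y. f j y - g j y) u = (\<lambda>y. lin_ext f u y - lin_ext g u y)"
  by (simp add: lin_ext_def right_diff_distrib sum_subtractf)

lemma lin_ext_shift_apply:
  assumes "finite {j. u j \<noteq> 0}" and "\<And>j. \<sigma> j = x \<longleftrightarrow> j = p"
  shows "lin_ext (\<lambda>j y. c j * ket (\<sigma> j) y) u x = (if valid x then c p * u p else 0)"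
proof -
  have "u j * (c j * ket (\<sigma> j) x) = (if j = p then (if valid x then c p * u p else 0) else 0)"
    for j
    using assms(2)[of j] by (cases "j = p") (auto simp: ket_def)
  then have "lin_ext (\<lambda>j y. c j * ket (\<sigma> j) y) u x
      = (\<Sum>j\<in>{j. u j \<noteq> 0}. if j = p then (if valid x then c p * u p else 0) else 0)"
    unfolding lin_ext_def by simp
  also have "\<dots> = (if valid x then c p * u p else 0)"
    using assms(1) by (simp add: sum.delta)
  finally show ?thesis .
qed

definition alpha_same :: "real \<Rightarrow> idx \<Rightarrow> real" where
  "alpha_same q i = (case i of (t, l, m) \<Rightarrow>
     sg t * (1 + q^2) * q powr (m - 1/2) / (qn q (2*l) * qn q (2*l+2))
       * sqrt (qn q (l+m+1) * qn q (l-m)))"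

definition alpha_up :: "real \<Rightarrow> idx \<Rightarrow> real" where
  "alpha_up q i = (case i of (t, l, m) \<Rightarrow>
     q powr (m - l - 1/2) / qn q (2*l+2) * sqrt (qn q (l+m+1) * qn q (l+m+2)))"

definition alpha_down :: "real \<Rightarrow> idx \<Rightarrow> real" where
  "alpha_down q i = (case i of (t, l, m) \<Rightarrow>
     q powr (m + l + 1/2) / qn q (2*l) * sqrt (qn q (l-m) * qn q (l-m-1)))"

lemma piA_b_eq:
  "piA_b q = (\<lambda>i y.
      complex_of_real (alpha_same q i) * ket (case i of (t, l, m) \<Rightarrow> (t, l, m+1)) y
    + complex_of_real (alpha_up q i) * ket (case i of (t, l, m) \<Rightarrow> (t, l+1, m+1)) y
    - complex_of_real (alpha_down q i) * ket (case i of (t, l, m) \<Rightarrow> (t, l-1, m)) y)"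
  by (auto simp: fun_eq_iff piA_b_def alpha_same_def alpha_up_def alpha_down_def)

lemma alpha_same_swap_copy: "alpha_same q (\<not> t, l, m) = - alpha_same q (t, l, m)"
  by (simp add: alpha_same_def sg_def divide_simps algebra_simps)

lemma piA_in_Dom: "u \<in> Dom \<Longrightarrow> piA q u \<in> Dom"
  unfolding piA_def piA_b_eq
  by (intro lin_ext_in_Dom Dom_add Dom_diff Dom_scale ket_in_Dom)

lemma piA_apply:
  assumes "u \<in> Dom"
  shows "piA q u (t, l, m) = (if valid (t, l, m) then
      complex_of_real (alpha_same q (t, l, m-1)) * u (t, l, m-1)
    + complex_of_real (alpha_up q (t, l-1, m-1)) * u (t, l-1, m-1)
    - complex_of_real (alpha_down q (t, l+1, m)) * u (t, l+1, m) else 0)"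
proof -
  have fin: "finite {j. u j \<noteq> 0}"
    using assms by (rule finite_support_Dom)
  let ?c = "\<lambda>\<alpha> i. complex_of_real (\<alpha> q i)"
  have "lin_ext (\<lambda>i y. ?c alpha_same i * ket (case i of (t, l, m) \<Rightarrow> (t, l, m+1)) y) u (t, l, m)
      = (if valid (t, l, m) then ?c alpha_same (t, l, m-1) * u (t, l, m-1) else 0)"
    by (rule lin_ext_shift_apply[OF fin]) (auto split: prod.splits)
  moreover have "lin_ext (\<lambda>i y. ?c alpha_up i * ket (case i of (t, l, m) \<Rightarrow> (t, l+1, m+1)) y) u (t, l, m)
      = (if valid (t, l, m) then ?c alpha_up (t, l-1, m-1) * u (t, l-1, m-1) else 0)"
    by (rule lin_ext_shift_apply[OF fin]) (auto split: prod.splits)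
  moreover have "lin_ext (\<lambda>i y. ?c alpha_down i * ket (case i of (t, l, m) \<Rightarrow> (t, l-1, m)) y) u (t, l, m)
      = (if valid (t, l, m) then ?c alpha_down (t, l+1, m) * u (t, l+1, m) else 0)"
    by (rule lin_ext_shift_apply[OF fin]) (auto split: prod.splits)
  ultimately show ?thesis
    unfolding piA_def piA_b_eq lin_ext_add lin_ext_diff by simp
qed

lemma J_b_eq:
  "J_b = (\<lambda>i y. \<i> powi \<lfloor>2 * snd (snd i)\<rfloor> * ket (case i of (s, l, m) \<Rightarrow> (\<not> s, l, -m)) y)"
  by (auto simp: fun_eq_iff J_b_def)

lemma Jop_eq_lin_ext: "Jop u = lin_ext J_b (\<lambda>j. cnj (u j))"
  by (simp add: Jop_def lin_ext_def)

lemma Jop_in_Dom: "u \<in> Dom \<Longrightarrow> Jop u \<in> Dom"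
  unfolding Jop_eq_lin_ext J_b_eq
  by (intro lin_ext_in_Dom Dom_scale ket_in_Dom) (simp add: Dom_def)

lemma Jop_apply:
  assumes "u \<in> Dom"
  shows "Jop u (s, l, m) = (if valid (s, l, m) then \<i> powi \<lfloor>- (2 * m)\<rfloor> * cnj (u (\<not> s, l, -m)) else 0)"
proof -
  have "finite {j. cnj (u j) \<noteq> 0}"
    using finite_support_Dom[OF assms] by simp
  then show ?thesis
    unfolding Jop_eq_lin_ext J_b_eq
    by (subst lin_ext_shift_apply[where p = "(\<not> s, l, -m)"]) (auto split: prod.splits)
qed

lemma Jop_uminus: "Jop (\<lambda>j. - u j) = (\<lambda>i. - Jop u i)"
  by (simp add: Jop_def sum_negf)

lemma valid_swap_copy: "valid (\<not> s, l, -m) \<longleftrightarrow> valid (s, l, m)"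
proof -
  have "l + m \<in> \<int> \<longleftrightarrow> l - m \<in> \<int>" if hp: "halfint_pos l"
  proof -
    obtain n :: nat where "l = real n + 1/2"
      using hp unfolding halfint_pos_def by blast
    then have "l + m = of_int (2 * int n + 1) - (l - m)" "l - m = of_int (2 * int n + 1) - (l + m)"
      by simp_all
    then show ?thesis
      by (metis Ints_diff Ints_of_int)
  qed
  then show ?thesis
    by (auto simp: valid_def)
qed

lemma valid_two_m_odd:
  assumes "valid (s, l, m)"
  obtains k :: int where "2 * m = of_int (2 * k + 1)"
proof -
  obtain n :: nat where n: "l = real n + 1/2"
    using assms by (auto simp: valid_def halfint_pos_def)
  obtain z :: int where z: "l - m = of_int z"
    using assms by (auto simp: valid_def elim: Ints_cases)
  have "2 * m = of_int (2 * (int n - z) + 1)"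
    using n z by simp
  then show ?thesis
    by (rule that)
qed

lemma i_powi_odd_phase: "\<i> powi (- (2 * k + 1)) * cnj (\<i> powi (2 * k + 1)) = -1"
proof -
  have "\<i> powi (- n) = (- \<i>) powi n" "cnj (\<i> powi n) = (- \<i>) powi n" for n
    by (simp_all add: complex_cnj_power_int power_int_minus flip: power_int_inverse)
  then have "\<i> powi (- (2 * k + 1)) * cnj (\<i> powi (2 * k + 1))
      = (- \<i>) powi (2 * k + 1) * (- \<i>) powi (2 * k + 1)"
    by (simp only:)
  also have "\<dots> = (-1) powi (2 * k + 1)"
    by (simp flip: power_int_mult_distrib)
  also have "\<dots> = -1"
    by (simp add: power_int_add power_int_mult)
  finally show ?thesis .
qed

lemma Jop_Jop:
  assumes "u \<in> Dom"
  shows "Jop (Jop u) = (\<lambda>i. - u i)"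
proof
  fix i :: idx
  obtain s l m where i: "i = (s, l, m)"
    by (cases i)
  show "Jop (Jop u) i = - u i"
  proof (cases "valid (s, l, m)")
    case True
    obtain k :: int where k: "2 * m = of_int (2 * k + 1)"
      using valid_two_m_odd[OF True] .
    then have floors: "\<lfloor>2 * m\<rfloor> = 2 * k + 1" "\<lfloor>- (2 * m)\<rfloor> = - (2 * k + 1)"
      by (simp_all only: floor_of_int flip: of_int_minus)
    have "Jop (Jop u) i = \<i> powi \<lfloor>- (2 * m)\<rfloor> * cnj (\<i> powi \<lfloor>2 * m\<rfloor>) * u i"
      using True i Jop_apply[OF Jop_in_Dom[OF assms]] Jop_apply[OF assms] valid_swap_copy by simp
    also have "\<dots> = - u i"
      unfolding floors i_powi_odd_phase by simp
    finally show ?thesis .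
  next
    case False
    then show ?thesis
      using i Jop_apply[OF Jop_in_Dom[OF assms]] Dom_vanishes[OF assms] by simp
  qed
qed

lemma inj_on_Jop: "inj_on Jop Dom"
proof (rule inj_onI)
  fix u w
  assume "u \<in> Dom" "w \<in> Dom" "Jop u = Jop w"
  then have "(\<lambda>i. - u i) = (\<lambda>i. - w i)"
    by (metis Jop_Jop)
  then show "u = w"
    by (simp add: fun_eq_iff)
qed

lemma Jinv_eq:
  assumes "u \<in> Dom"
  shows "Jinv u = (\<lambda>i. - Jop u i)"
proof -
  have "(\<lambda>i. - Jop u i) \<in> Dom"
    using assms by (intro Dom_uminus Jop_in_Dom)
  moreover have "Jop (\<lambda>i. - Jop u i) = u"
    by (simp add: Jop_uminus Jop_Jop[OF assms])
  ultimately show ?thesis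
    unfolding Jinv_def by (rule inv_into_f_eq[OF inj_on_Jop])
qed

lemma valid_bounds: "valid (s, l, m) \<Longrightarrow> 0 < l \<and> \<bar>m\<bar> \<le> l"
  by (auto simp: valid_def halfint_pos_def)

lemma valid_spin_half: "valid (s, 1/2, 1/2)" "valid (s, 1/2, -1/2)"
  by (auto simp: valid_def halfint_pos_def intro: exI[of _ 0])

lemma qn_pos:
  assumes "0 < q" "0 < x"
  shows "0 < qn q x"
proof (cases q "1::real" rule: linorder_cases)
  case less
  then have "q powr x < 1" "1 < q powr (- x)" "1 < q powr (-1)"
    using assms powr_less_mono2[of x q 1] powr_less_mono2_neg[of "- x" q 1]
      powr_less_mono2_neg[of "-1" q 1] by simp_all
  then show ?thesis
    using less by (simp add: qn_def divide_neg_neg)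
next
  case equal
  then show ?thesis
    using assms by (simp add: qn_def)
next
  case greater
  then have "1 < q powr x" "q powr (- x) < 1" "q powr (-1) < 1"
    using assms powr_less_mono2[of x 1 q] powr_less_mono2_neg[of "- x" 1 q]
      powr_less_mono2_neg[of "-1" 1 q] by simp_all
  then have "0 < q powr x - q powr (- x)" "0 < q - q powr (-1)"
    using greater by linarith+
  then show ?thesis
    using greater by (simp add: qn_def)
qed

lemma alpha_same_spin_half_pos:
  assumes "0 < q"
  shows "0 < alpha_same q (True, 1/2, -1/2)"
  using assms qn_pos[OF assms, of 1] qn_pos[OF assms, of 3]
  by (simp add: alpha_same_def sg_def zero_less_divide_iff add_pos_nonneg)

lemma Jop_piA_Jinv_piA_ket_vanishes:
  "Jop (piA q (Jinv (piA q (ket (True, 1/2, 1/2))))) (True, 1/2, 1/2) = 0"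
proof -
  define v where "v = ket (True, 1/2, 1/2)"
  have v: "v \<in> Dom"
    unfolding v_def by (rule ket_in_Dom)
  define w where "w = Jinv (piA q v)"
  have w_eq: "w = (\<lambda>i. - Jop (piA q v) i)"
    unfolding w_def by (rule Jinv_eq[OF piA_in_Dom[OF v]])
  have w: "w \<in> Dom"
    unfolding w_eq by (intro Dom_uminus Jop_in_Dom piA_in_Dom v)
  have "piA q v (True, 3/2, 1/2) = 0"
    using piA_apply[OF v] by (simp add: v_def ket_def)
  then have "w (False, 3/2, -1/2) = 0"
    unfolding w_eq using Jop_apply[OF piA_in_Dom[OF v]] by simp
  moreover have "w (False, 1/2, -3/2) = 0" "w (False, -1/2, -3/2) = 0"
    using Dom_vanishes[OF w] valid_bounds by force+
  ultimately have "piA q w (False, 1/2, -1/2) = 0"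
    using piA_apply[OF w] by simp
  then show ?thesis
    using Jop_apply[OF piA_in_Dom[OF w]] by (simp add: v_def w_def)
qed

lemma piA_Jop_piA_Jinv_ket_apply:
  "piA q (Jop (piA q (Jinv (ket (True, 1/2, 1/2))))) (True, 1/2, 1/2)
     = complex_of_real (alpha_same q (True, 1/2, -1/2) ^ 2)"
proof -
  define v where "v = ket (True, 1/2, 1/2)"
  have v: "v \<in> Dom"
    unfolding v_def by (rule ket_in_Dom)
  define z where "z = Jinv v"
  have z_eq: "z = (\<lambda>i. - Jop v i)"
    unfolding z_def by (rule Jinv_eq[OF v])
  have z: "z \<in> Dom"
    unfolding z_eq by (intro Dom_uminus Jop_in_Dom v)
  define u where "u = Jop (piA q z)"
  have u: "u \<in> Dom"
    unfolding u_def by (intro Jop_in_Dom piA_in_Dom z)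
  let ?\<alpha> = "alpha_same q (True, 1/2, -1/2)"
  have z_support: "z i = 0" if "i \<noteq> (False, 1/2, -1/2)" for i
    using that Jop_apply[OF v] by (cases i) (auto simp: z_eq v_def ket_def)
  have "z (False, 1/2, -1/2) = - \<i>"
    using Jop_apply[OF v] valid_spin_half by (simp add: z_eq v_def ket_def)
  then have "piA q z (False, 1/2, 1/2) = \<i> * ?\<alpha>"
    using piA_apply[OF z] z_support valid_spin_half alpha_same_swap_copy[of q False] by simp
  then have "u (True, 1/2, -1/2) = ?\<alpha>"
    using Jop_apply[OF piA_in_Dom[OF z]] valid_spin_half by (simp add: u_def)
  moreover have "u (True, 3/2, 1/2) = 0"
    using Jop_apply[OF piA_in_Dom[OF z]] piA_apply[OF z] z_support by (simp add: u_def)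
  moreover have "u (True, -1/2, -1/2) = 0"
    using Dom_vanishes[OF u] valid_bounds by force
  ultimately show ?thesis
    using piA_apply[OF u] valid_spin_half by (simp add: u_def z_def v_def power2_eq_square)
qed

theorem proposition2:
  fixes q :: real
  assumes "0 < q" and "q \<le> 1"
  shows "\<exists>T\<in>pi_alg q. \<exists>S\<in>pi_alg q. \<exists>v\<in>Dom.
           Jop (T (Jinv (S v))) \<noteq> S (Jop (T (Jinv v)))"
proof -
  let ?v = "ket (True, 1/2, 1/2)"
  have "Jop (piA q (Jinv (piA q ?v))) (True, 1/2, 1/2) \<noteq> piA q (Jop (piA q (Jinv ?v))) (True, 1/2, 1/2)"
    unfolding Jop_piA_Jinv_piA_ket_vanishes piA_Jop_piA_Jinv_ket_apply
    using alpha_same_spin_half_pos[OF \<open>0 < q\<close>] by simp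
  then have "Jop (piA q (Jinv (piA q ?v))) \<noteq> piA q (Jop (piA q (Jinv ?v)))"
    by metis
  then show ?thesis
    using ket_in_Dom pi_alg.alg_a by blast
qed

end
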